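(* Let $L$ be a lattice diagram with $n$ cells, and let $k\ge1$ be an integer. Write the complement $\overline L=(\mathbb{N}\times\mathbb{N})\setminus L$ as $\{(\overline p_1,\overline q_1),(\overline p_2,\overline q_2),\dots\}$, ordered increasingly in the order described below. Then $$h_k(\partial X)\,\Delta_L(X,Y)=\sum_{1\le i_1<i_2<\dots<i_k}\epsilon\big(L,h_k(i_1,\dots,i_k;L)\big)\,\Delta_{h_k(i_1,\dots,i_k;L)}(X,Y).$$ Here $h_k(i_1,\dots,i_k;L)$ is the lattice diagram whose complement is obtained from $\overline L$ by replacing $(\overline p_{i_1},\overline q_{i_1}),\dots,(\overline p_{i_k},\overline q_{i_k})$ by $(\overline p_{i_1}+1,\overline q_{i_1}),\dots,(\overline p_{i_k}+1,\overline q_{i_k})$ and keeping the others unchanged; terms for which this does not produce the complement of an $n$-cell diagram are zero. The coefficient $\epsilon(L,h_k(i_1,\dots,i_k;L))$ is a positive integer, given by $\epsilon(L,L')=\prod_{t=1}^n p_t!\,q_t!\big/\prod_{t=1}^n p'_t!\,q'_t!$, where $(p_t,q_t)$ and $(p'_t,q'_t)$ are the cells of $L$ and $L'$ respectively.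
   Context: A lattice diagram is a finite subset of $\mathbb{N}\times\mathbb{N}$. Cells are ordered by $(p,q)<(p',q')$ iff $q<q'$, or $q=q'$ and $p<p'$. For a lattice diagram $L$ with cells $(p_1,q_1)<\dots<(p_n,q_n)$, set $\Delta_L(X,Y)=\det(x_r^{p_t}y_r^{q_t})_{1\le r,t\le n}$, with $X=(x_1,\dots,x_n)$ and $Y=(y_1,\dots,y_n)$. The function $h_k$ is the $k$-th complete homogeneous symmetric function, and $h_k(\partial X)$ is obtained from it by substituting $\partial/\partial x_r$ for $x_r$. *)

theory Defs
  imports "HOL-Library.Poly_Mapping" "HOL-Library.FuncSet" "HOL-Library.Product_Lexorder" "Jordan_Normal_Form.Determinant"
begin

text \<open>Polynomials in the variables x_r (encoded Inl r) and y_r (encoded Inr r),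
  with rational coefficients: finitely supported maps from monomials
  (finitely supported exponent vectors) to coefficients.\<close>

type_synonym mpoly = "((nat + nat) \<Rightarrow>\<^sub>0 nat) \<Rightarrow>\<^sub>0 rat"

definition Xv :: "nat \<Rightarrow> mpoly" where
  "Xv r = Poly_Mapping.single (Poly_Mapping.single (Inl r) 1) 1"

definition Yv :: "nat \<Rightarrow> mpoly" where
  "Yv r = Poly_Mapping.single (Poly_Mapping.single (Inr r) 1) 1"

definition const_poly :: "rat \<Rightarrow> mpoly" where
  "const_poly c = Poly_Mapping.single 0 c"

definition pdiff :: "(nat + nat) \<Rightarrow> mpoly \<Rightarrow> mpoly" where
  "pdiff v P = (\<Sum>e\<in>Poly_Mapping.keys P.
      Poly_Mapping.single (e - Poly_Mapping.single v 1) (of_nat (Poly_Mapping.lookup e v) * Poly_Mapping.lookup P e))"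

fun dx_all :: "(nat \<Rightarrow> nat) \<Rightarrow> nat \<Rightarrow> mpoly \<Rightarrow> mpoly" where
  "dx_all m 0 P = P"
| "dx_all m (Suc r) P = (pdiff (Inl r) ^^ m r) (dx_all m r P)"

definition hk_diff :: "nat \<Rightarrow> nat \<Rightarrow> mpoly \<Rightarrow> mpoly" where
  "hk_diff n k P = (\<Sum>m\<in>{m \<in> {..<n} \<rightarrow>\<^sub>E {..k}. sum m {..<n} = k}. dx_all m n P)"

text \<open>Cells of a lattice diagram, listed increasingly: (p,q) < (p',q') iff
  q < q', or q = q' and p < p'.\<close>
definition cells :: "(nat \<times> nat) set \<Rightarrow> (nat \<times> nat) list" where
  "cells L = map (\<lambda>(q, p). (p, q)) (sorted_list_of_set ((\<lambda>(p, q). (q, p)) ` L))"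

definition Delta :: "(nat \<times> nat) set \<Rightarrow> mpoly" where
  "Delta L = det (mat (card L) (card L)
      (\<lambda>(r, t). Xv r ^ fst (cells L ! t) * Yv r ^ snd (cells L ! t)))"

definition hk_diag :: "(nat \<times> nat) set \<Rightarrow> (nat \<times> nat) set \<Rightarrow> (nat \<times> nat) set" where
  "hk_diag L R = - ((- L - R) \<union> (\<lambda>(p, q). (p + 1, q)) ` R)"

definition epsilon :: "(nat \<times> nat) set \<Rightarrow> (nat \<times> nat) set \<Rightarrow> rat" where
  "epsilon L L' = of_nat (\<Prod>(p, q)\<in>L. fact p * fact q) / of_nat (\<Prod>(p, q)\<in>L'. fact p * fact q)"

text \<open>Index sets R of k complement cells for which the replacement gives the
  complement of an n-cell diagram (the other terms are zero).\<close>
definition valid_sets :: "(nat \<times> nat) set \<Rightarrow> nat \<Rightarrow> (nat \<times> nat) set set" where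
  "valid_sets L k = {R. R \<subseteq> - L \<and> finite R \<and> card R = k \<and>
      finite (hk_diag L R) \<and> card (hk_diag L R) = card L}"

end

theory Submission
  imports Defs
begin

text \<open>
  Compare coefficients. Expanding \<open>\<Delta>\<^sub>L\<close> over permutations, \<open>h\<^sub>k(\<partial>X)\<close> turns the coefficient
  of \<open>x\<^sup>a y\<^sup>b\<close> into \<open>\<Prod>p\<^sub>t! / \<Prod>a\<^sub>i!\<close> times \<open>det B\<close>, where \<open>B\<^sub>i\<^sub>t = [q\<^sub>t = b\<^sub>i \<and> a\<^sub>i \<le> p\<^sub>t]\<close>
  records which cells of \<open>L\<close> can be lowered to \<open>(a\<^sub>i, b\<^sub>i)\<close>. If these cells are distinct they form
  a diagram \<open>S\<close>, and \<open>B\<close> factors as the permutation matrix of \<open>S\<close> (whose determinant is the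
  coefficient of \<open>x\<^sup>a y\<^sup>b\<close> in \<open>\<Delta>\<^sub>S\<close>) times the 0/1 matrix comparing the cells of \<open>S\<close> with those
  of \<open>L\<close>, both in increasing order. Its rows are intervals; it is unitriangular if the \<open>s\<close>-th
  cell of \<open>S\<close> lies in the row of the \<open>s\<close>-th cell of \<open>L\<close>, weakly to its left, and has rank \<open>s\<close>
  among the cells of \<open>L\<close>, and singular otherwise. The diagrams dominated by \<open>L\<close> in this sense
  whose x-coordinates sum to \<open>k\<close> less than those of \<open>L\<close> are exactly the \<open>h\<^sub>k(i\<^sub>1,\<dots>,i\<^sub>k;L)\<close>,
  each for a unique set of moved complement cells, which is read off from where the rank in
  \<open>S\<close> exceeds the rank in \<open>L\<close>. Since matching cells share their rows, \<open>\<epsilon>(L,S) = \<Prod>p\<^sub>t! / \<Prod>a\<^sub>i!\<close>.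
\<close>

section \<open>Derivatives of monomials\<close>

definition falling_fact :: "nat \<Rightarrow> nat \<Rightarrow> nat" where
  "falling_fact a j = (\<Prod>i<j. a - i)"

lemma falling_fact_Suc: "falling_fact a (Suc j) = falling_fact a j * (a - j)"
  by (simp add: falling_fact_def)

lemma falling_fact_eq_0: "a < j \<Longrightarrow> falling_fact a j = 0"
  unfolding falling_fact_def by (rule prod_zero) auto

lemma falling_fact_mult_fact: "j \<le> a \<Longrightarrow> falling_fact a j * fact (a - j) = (fact a :: nat)"
proof (induction j)
  case 0
  then show ?case by (simp add: falling_fact_def)
next
  case (Suc j)
  have "a - j = Suc (a - Suc j)" using Suc.prems by simp
  then have "fact (a - j) = (a - j) * (fact (a - Suc j) :: nat)"
    by (simp only: fact_Suc of_nat_id)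
  then have "falling_fact a (Suc j) * fact (a - Suc j) = falling_fact a j * fact (a - j)"
    by (simp only: falling_fact_Suc mult.assoc)
  then show ?case using Suc by simp
qed

lemma of_nat_falling_fact_diff:
  "b \<le> a \<Longrightarrow> (of_nat (falling_fact a (a - b)) :: 'a :: field_char_0) = fact a / fact b"
  using falling_fact_mult_fact[of "a - b" a]
  by (simp add: field_simps) (metis of_nat_fact of_nat_mult)

lemma pdiff_eq_sum_superset:
  assumes "finite S" "Poly_Mapping.keys P \<subseteq> S"
  shows "pdiff v P = (\<Sum>e\<in>S. Poly_Mapping.single (e - Poly_Mapping.single v 1)
            (of_nat (Poly_Mapping.lookup e v) * Poly_Mapping.lookup P e))"
  unfolding pdiff_def
  by (rule sum.mono_neutral_left[OF assms]) (auto simp: in_keys_iff)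

lemma pdiff_add: "pdiff v (P + Q) = pdiff v P + pdiff v Q"
proof -
  let ?S = "Poly_Mapping.keys P \<union> Poly_Mapping.keys Q"
  have "Poly_Mapping.keys (P + Q) \<subseteq> ?S" by (rule keys_add)
  then show ?thesis
    by (simp add: pdiff_eq_sum_superset[of ?S] lookup_add distrib_left single_add sum.distrib)
qed

lemma pdiff_zero [simp]: "pdiff v 0 = 0"
  by (simp add: pdiff_def)

lemma pdiff_sum: "pdiff v (sum f A) = (\<Sum>a\<in>A. pdiff v (f a))"
  by (induction A rule: infinite_finite_induct) (auto simp: pdiff_add)

lemma pdiff_single: "pdiff v (Poly_Mapping.single e c) =
   Poly_Mapping.single (e - Poly_Mapping.single v 1) (of_nat (Poly_Mapping.lookup e v) * c)"
  by (subst pdiff_eq_sum_superset[of "{e}"]) auto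

lemma funpow_pdiff_sum: "(pdiff v ^^ j) (sum f A) = (\<Sum>a\<in>A. (pdiff v ^^ j) (f a))"
  by (induction j) (auto simp: pdiff_sum)

lemma funpow_pdiff_single: "(pdiff v ^^ j) (Poly_Mapping.single e c) =
   Poly_Mapping.single (e - Poly_Mapping.single v j) (c * of_nat (falling_fact (Poly_Mapping.lookup e v) j))"
proof (induction j)
  case 0
  then show ?case by (simp add: falling_fact_def)
next
  case (Suc j)
  have "e - Poly_Mapping.single v j - Poly_Mapping.single v 1 = e - Poly_Mapping.single v (Suc j)"
    by (rule poly_mapping_eqI) (simp add: lookup_minus lookup_single when_def)
  moreover have "Poly_Mapping.lookup (e - Poly_Mapping.single v j) v = Poly_Mapping.lookup e v - j"
    by (simp add: lookup_minus)
  ultimately show ?case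
    by (simp only: funpow.simps comp_apply Suc.IH pdiff_single falling_fact_Suc of_nat_mult mult_ac)
qed

lemma dx_all_sum: "dx_all m r (sum f A) = (\<Sum>a\<in>A. dx_all m r (f a))"
  by (induction r) (auto simp: funpow_pdiff_sum)

definition dx_exponent :: "(nat \<Rightarrow> nat) \<Rightarrow> nat \<Rightarrow> (nat + nat) \<Rightarrow>\<^sub>0 nat" where
  "dx_exponent m r = (\<Sum>i<r. Poly_Mapping.single (Inl i) (m i))"

lemma lookup_dx_exponent: "Poly_Mapping.lookup (dx_exponent m r) v =
   (case v of Inl i \<Rightarrow> if i < r then m i else 0 | Inr i \<Rightarrow> 0)"
  unfolding dx_exponent_def lookup_sum by (cases v) (auto simp: lookup_single when_def)

lemma dx_all_single: "dx_all m r (Poly_Mapping.single e c) =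
   Poly_Mapping.single (e - dx_exponent m r)
     (c * (\<Prod>i<r. of_nat (falling_fact (Poly_Mapping.lookup e (Inl i)) (m i))))"
proof (induction r)
  case 0
  then show ?case by (simp add: dx_exponent_def)
next
  case (Suc r)
  have "e - dx_exponent m r - Poly_Mapping.single (Inl r) (m r) = e - dx_exponent m (Suc r)"
  proof (rule poly_mapping_eqI)
    fix v
    show "Poly_Mapping.lookup (e - dx_exponent m r - Poly_Mapping.single (Inl r) (m r)) v =
          Poly_Mapping.lookup (e - dx_exponent m (Suc r)) v"
      by (cases v) (simp_all add: lookup_minus lookup_single lookup_dx_exponent when_def)
  qed
  moreover have "Poly_Mapping.lookup (e - dx_exponent m r) (Inl r) = Poly_Mapping.lookup e (Inl r)"
    by (simp add: lookup_minus lookup_dx_exponent)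
  ultimately show ?case
    by (simp only: dx_all.simps Suc.IH funpow_pdiff_single prod.lessThan_Suc mult.assoc)
qed

lemma Xv_power: "Xv r ^ a = Poly_Mapping.single (Poly_Mapping.single (Inl r) a) 1"
  by (induction a) (simp_all add: Xv_def mult_single single_add[symmetric])

lemma Yv_power: "Yv r ^ a = Poly_Mapping.single (Poly_Mapping.single (Inr r) a) 1"
  by (induction a) (simp_all add: Yv_def mult_single single_add[symmetric])

lemma prod_single_one:
  "(\<Prod>i\<in>A. Poly_Mapping.single (g i) (1::rat)) = (Poly_Mapping.single (\<Sum>i\<in>A. g i) 1 :: mpoly)"
  by (induction A rule: infinite_finite_induct) (auto simp: mult_single)

definition xy_exponent :: "nat \<Rightarrow> (nat \<Rightarrow> nat) \<Rightarrow> (nat \<Rightarrow> nat) \<Rightarrow> (nat + nat) \<Rightarrow>\<^sub>0 nat" where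
  "xy_exponent n \<alpha> \<beta> =
     (\<Sum>i<n. Poly_Mapping.single (Inl i) (\<alpha> i) + Poly_Mapping.single (Inr i) (\<beta> i))"

lemma lookup_xy_exponent: "Poly_Mapping.lookup (xy_exponent n \<alpha> \<beta>) v =
   (case v of Inl i \<Rightarrow> if i < n then \<alpha> i else 0 | Inr i \<Rightarrow> if i < n then \<beta> i else 0)"
  unfolding xy_exponent_def lookup_sum by (cases v) (auto simp: lookup_add lookup_single when_def)

lemma xy_exponent_eq_iff:
  "xy_exponent n \<alpha> \<beta> = xy_exponent n a b \<longleftrightarrow> (\<forall>i<n. \<alpha> i = a i \<and> \<beta> i = b i)"
proof
  assume e: "xy_exponent n \<alpha> \<beta> = xy_exponent n a b"
  show "\<forall>i<n. \<alpha> i = a i \<and> \<beta> i = b i"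
  proof (intro allI impI)
    fix i assume "i < n"
    with arg_cong[OF e, of "\<lambda>e. Poly_Mapping.lookup e (Inl i)"]
         arg_cong[OF e, of "\<lambda>e. Poly_Mapping.lookup e (Inr i)"]
    show "\<alpha> i = a i \<and> \<beta> i = b i" by (simp add: lookup_xy_exponent)
  qed
next
  assume "\<forall>i<n. \<alpha> i = a i \<and> \<beta> i = b i"
  then show "xy_exponent n \<alpha> \<beta> = xy_exponent n a b"
    by (intro poly_mapping_eqI) (auto simp: lookup_xy_exponent split: sum.split)
qed

lemma xy_exponent_eqD:
  "xy_exponent n \<alpha> \<beta> = e \<Longrightarrow>
     e = xy_exponent n (\<lambda>i. Poly_Mapping.lookup e (Inl i)) (\<lambda>i. Poly_Mapping.lookup e (Inr i))"
  by (intro poly_mapping_eqI) (auto simp: lookup_xy_exponent split: sum.split)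

lemma xy_exponent_minus_dx_exponent:
  "xy_exponent n \<alpha> \<beta> - dx_exponent m n = xy_exponent n (\<lambda>i. \<alpha> i - m i) \<beta>"
  by (intro poly_mapping_eqI)
     (auto simp: lookup_xy_exponent lookup_minus lookup_dx_exponent split: sum.split)

definition perms :: "nat \<Rightarrow> (nat \<Rightarrow> nat) set" where
  "perms n = {p. p permutes {0..<n}}"

lemma perms_less: "\<sigma> \<in> perms n \<Longrightarrow> i < n \<Longrightarrow> \<sigma> i < n"
  unfolding perms_def using permutes_in_image[of \<sigma> "{0..<n}" i] by auto

lemma sum_perms_reindex: "\<sigma> \<in> perms n \<Longrightarrow> (\<Sum>i<n. f (\<sigma> i)) = (\<Sum>i<n. f i)"
  unfolding perms_def lessThan_atLeast0
  using sum.reindex_bij_betw[OF permutes_imp_bij, of \<sigma> "{0..<n}" f] by simp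

lemma prod_perms_reindex: "\<sigma> \<in> perms n \<Longrightarrow> (\<Prod>i<n. f (\<sigma> i)) = (\<Prod>i<n. f i)"
  unfolding perms_def lessThan_atLeast0
  using prod.reindex_bij_betw[OF permutes_imp_bij, of \<sigma> "{0..<n}" f] by simp

lemma det_perms: "A \<in> carrier_mat n n \<Longrightarrow>
    det A = (\<Sum>\<sigma>\<in>perms n. of_int (sign \<sigma>) * (\<Prod>i<n. A $$ (i, \<sigma> i)))"
  unfolding perms_def lessThan_atLeast0 by (rule det_def')

lemma Delta_eq_sum_perms: "Delta S = (\<Sum>\<sigma>\<in>perms (card S).
   Poly_Mapping.single (xy_exponent (card S) (\<lambda>i. fst (cells S ! \<sigma> i)) (\<lambda>i. snd (cells S ! \<sigma> i)))
     (of_int (sign \<sigma>)))"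
  unfolding Delta_def
proof (subst det_perms[of _ "card S"], simp, intro sum.cong refl)
  fix \<sigma> assume \<sigma>: "\<sigma> \<in> perms (card S)"
  have "(\<Prod>i<card S. mat (card S) (card S)
            (\<lambda>(r, t). Xv r ^ fst (cells S ! t) * Yv r ^ snd (cells S ! t)) $$ (i, \<sigma> i))
      = (\<Prod>i<card S. Poly_Mapping.single (Poly_Mapping.single (Inl i) (fst (cells S ! \<sigma> i))
                      + Poly_Mapping.single (Inr i) (snd (cells S ! \<sigma> i))) 1)"
    using perms_less[OF \<sigma>] by (intro prod.cong) (simp_all add: Xv_power Yv_power mult_single)
  then show "of_int (sign \<sigma>) * (\<Prod>i<card S. mat (card S) (card S)
            (\<lambda>(r, t). Xv r ^ fst (cells S ! t) * Yv r ^ snd (cells S ! t)) $$ (i, \<sigma> i)) =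
      Poly_Mapping.single (xy_exponent (card S) (\<lambda>i. fst (cells S ! \<sigma> i)) (\<lambda>i. snd (cells S ! \<sigma> i)))
        (of_int (sign \<sigma>))"
    by (simp add: prod_single_one xy_exponent_def single_of_int[symmetric] mult_single
             del: single_of_int)
qed

definition hk_exponents :: "nat \<Rightarrow> nat \<Rightarrow> (nat \<Rightarrow> nat) set" where
  "hk_exponents n k = {m \<in> {..<n} \<rightarrow>\<^sub>E {..k}. sum m {..<n} = k}"

lemma finite_hk_exponents: "finite (hk_exponents n k)"
  unfolding hk_exponents_def by (rule finite_subset[of _ "{..<n} \<rightarrow>\<^sub>E {..k}"]) (auto intro: finite_PiE)

lemma hk_diff_Delta_eq: "hk_diff (card L) k (Delta L) =
   (\<Sum>m\<in>hk_exponents (card L) k. \<Sum>\<sigma>\<in>perms (card L).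
     Poly_Mapping.single
       (xy_exponent (card L) (\<lambda>i. fst (cells L ! \<sigma> i) - m i) (\<lambda>i. snd (cells L ! \<sigma> i)))
       (of_int (sign \<sigma>) * (\<Prod>i<card L. of_nat (falling_fact (fst (cells L ! \<sigma> i)) (m i)))))"
  unfolding hk_diff_def Delta_eq_sum_perms hk_exponents_def[symmetric] dx_all_sum dx_all_single
    xy_exponent_minus_dx_exponent
  by (intro sum.cong refl) (simp add: lookup_xy_exponent)

lemma restrict_diff_in_hk_exponents_iff:
  assumes "\<forall>i<n. a i \<le> P i"
  shows "restrict (\<lambda>i. P i - a i) {..<n} \<in> hk_exponents n k \<longleftrightarrow> (\<Sum>i<n. P i) = (\<Sum>i<n. a i) + k"
proof -
  let ?m = "restrict (\<lambda>i. P i - a i) {..<n}"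
  have "sum ?m {..<n} = (\<Sum>i<n. P i - a i)" by simp
  also have "\<dots> = (\<Sum>i<n. P i) - (\<Sum>i<n. a i)" by (rule sum_subtractf_nat) (use assms in auto)
  finally have "sum ?m {..<n} = (\<Sum>i<n. P i) - (\<Sum>i<n. a i)" .
  moreover have "(\<Sum>i<n. a i) \<le> (\<Sum>i<n. P i)" using assms by (intro sum_mono) auto
  moreover have "?m i \<le> sum ?m {..<n}" if "i < n" for i
    by (rule member_le_sum) (use that in auto)
  ultimately show ?thesis unfolding hk_exponents_def by (auto simp: PiE_def extensional_def)
qed

lemma prod_falling_fact_neq_0D:
  fixes P m :: "nat \<Rightarrow> nat"
  assumes "(\<Prod>i<n. (of_nat (falling_fact (P i) (m i)) :: 'a :: comm_semiring_1)) \<noteq> 0" "i < n"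
  shows "m i \<le> P i"
proof (rule ccontr)
  assume "\<not> m i \<le> P i"
  then have "falling_fact (P i) (m i) = 0" by (intro falling_fact_eq_0) simp
  then have "(\<Prod>i<n. (of_nat (falling_fact (P i) (m i)) :: 'a)) = 0"
    by (intro prod_zero bexI[of _ i]) (use assms(2) in auto)
  with assms(1) show False ..
qed

lemma hk_exponent_eq_restrict_diff:
  assumes "m \<in> hk_exponents n k" "\<forall>i<n. P i - m i = a i" "\<And>i. i < n \<Longrightarrow> m i \<le> P i"
  shows "m = restrict (\<lambda>i. P i - a i) {..<n}"
proof
  fix i
  show "m i = restrict (\<lambda>i. P i - a i) {..<n} i"
  proof (cases "i < n")
    case True
    with assms(2) assms(3)[of i] show ?thesis by auto
  qed (use assms(1) in \<open>auto simp: hk_exponents_def PiE_def extensional_def\<close>)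
qed

text \<open>Differentiating \<open>x\<^sup>P y\<^sup>Q\<close> yields \<open>x\<^sup>a y\<^sup>b\<close> for at most one exponent vector \<open>m\<close>, namely \<open>P - a\<close>.\<close>

lemma sum_hk_exponents_collapse:
  fixes P Q a b :: "nat \<Rightarrow> nat" and s :: rat
  shows "(\<Sum>m\<in>hk_exponents n k. if \<forall>i<n. P i - m i = a i \<and> Q i = b i
            then s * (\<Prod>i<n. of_nat (falling_fact (P i) (m i))) else 0)
   = (if (\<forall>i<n. Q i = b i \<and> a i \<le> P i) \<and> (\<Sum>i<n. P i) = (\<Sum>i<n. a i) + k
      then s * (\<Prod>i<n. of_nat (falling_fact (P i) (P i - a i))) else 0)"
    (is "(\<Sum>m\<in>_. ?t m) = _")
proof (cases "\<forall>i<n. Q i = b i \<and> a i \<le> P i")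
  case True
  define m0 where "m0 = restrict (\<lambda>i. P i - a i) {..<n}"
  have "?t m = (if m = m0 then ?t m0 else 0)" if m: "m \<in> hk_exponents n k" for m
  proof (cases "m = m0")
    case True
    then show ?thesis by (simp only: if_True simp_thms)
  next
    case False
    have "?t m = 0"
    proof (rule ccontr)
      assume "?t m \<noteq> 0"
      then have eq: "\<forall>i<n. P i - m i = a i"
        and nz: "(\<Prod>i<n. (of_nat (falling_fact (P i) (m i)) :: rat)) \<noteq> 0"
        by (auto split: if_splits)
      have "m = m0"
        unfolding m0_def using hk_exponent_eq_restrict_diff[OF m eq] prod_falling_fact_neq_0D[OF nz] .
      with False show False ..
    qed
    with False show ?thesis by simp
  qed
  then have "(\<Sum>m\<in>hk_exponents n k. ?t m) = (\<Sum>m\<in>hk_exponents n k. if m = m0 then ?t m0 else 0)"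
    by (rule sum.cong[OF refl])
  also have "\<dots> = (if m0 \<in> hk_exponents n k then ?t m0 else 0)"
    by (rule sum.delta[OF finite_hk_exponents])
  finally show ?thesis
    using True restrict_diff_in_hk_exponents_iff[of n a P k]
    by (auto simp: m0_def intro!: prod.cong)
next
  case False
  then obtain j where j: "j < n" "\<not> (Q j = b j \<and> a j \<le> P j)" by auto
  have "\<not> (\<forall>i<n. P i - m i = a i \<and> Q i = b i)" for m
  proof
    assume "\<forall>i<n. P i - m i = a i \<and> Q i = b i"
    then have "P j - m j = a j" "Q j = b j" using j(1) by auto
    with j(2) show False by auto
  qed
  then have t0: "?t m = 0" for m by (rule if_not_P)
  have "(\<Sum>m\<in>hk_exponents n k. ?t m) = 0" by (simp only: t0 sum.neutral_const)
  moreover have "\<not> ((\<forall>i<n. Q i = b i \<and> a i \<le> P i) \<and> (\<Sum>i<n. P i) = (\<Sum>i<n. a i) + k)"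
    using False by blast
  ultimately show ?thesis by (simp only: if_False)
qed

definition reach_mat :: "(nat \<times> nat) set \<Rightarrow> (nat \<Rightarrow> nat) \<Rightarrow> (nat \<Rightarrow> nat) \<Rightarrow> rat mat" where
  "reach_mat L a b = mat (card L) (card L)
     (\<lambda>(i, t). if snd (cells L ! t) = b i \<and> a i \<le> fst (cells L ! t) then 1 else 0)"

lemma reach_mat_carrier: "reach_mat L a b \<in> carrier_mat (card L) (card L)"
  by (simp add: reach_mat_def)

lemma det_reach_mat_perms: "det (reach_mat L a b) = (\<Sum>\<sigma>\<in>perms (card L). of_int (sign \<sigma>) *
    (\<Prod>i<card L. if snd (cells L ! \<sigma> i) = b i \<and> a i \<le> fst (cells L ! \<sigma> i) then 1 else 0))"
  unfolding det_perms[OF reach_mat_carrier]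
  by (intro sum.cong refl arg_cong2[where f = "(*)"] prod.cong) (auto simp: reach_mat_def perms_less)

lemma prod_falling_fact_perm:
  assumes \<sigma>: "\<sigma> \<in> perms n" and le: "\<forall>i<n. a i \<le> p (\<sigma> i)"
  shows "(\<Prod>i<n. (of_nat (falling_fact (p (\<sigma> i)) (p (\<sigma> i) - a i)) :: 'a :: field_char_0))
    = (\<Prod>t<n. fact (p t)) / (\<Prod>i<n. fact (a i))"
proof -
  have "(\<Prod>i<n. (of_nat (falling_fact (p (\<sigma> i)) (p (\<sigma> i) - a i)) :: 'a))
      = (\<Prod>i<n. fact (p (\<sigma> i)) / fact (a i))"
    using le by (intro prod.cong) (auto simp: of_nat_falling_fact_diff)
  then show ?thesis
    using prod_perms_reindex[OF \<sigma>, of "\<lambda>t. fact (p t) :: 'a"] by (simp add: prod_dividef)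
qed

lemma lookup_hk_diff_Delta:
  fixes a b :: "nat \<Rightarrow> nat" and L :: "(nat \<times> nat) set" and k :: nat
  defines "n \<equiv> card L"
  shows "Poly_Mapping.lookup (hk_diff n k (Delta L)) (xy_exponent n a b) =
    (if (\<Sum>t<n. fst (cells L ! t)) = (\<Sum>i<n. a i) + k
     then (\<Prod>t<n. fact (fst (cells L ! t))) / (\<Prod>i<n. fact (a i)) * det (reach_mat L a b) else 0)"
proof -
  let ?p = "\<lambda>t. fst (cells L ! t)" and ?q = "\<lambda>t. snd (cells L ! t)"
  let ?C = "(\<Sum>t<n. ?p t) = (\<Sum>i<n. a i) + k"
  let ?K = "(\<Prod>t<n. fact (?p t)) / (\<Prod>i<n. fact (a i)) :: rat"
  let ?B = "\<lambda>i t. if ?q t = b i \<and> a i \<le> ?p t then 1 else (0::rat)"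
  have "Poly_Mapping.lookup (hk_diff n k (Delta L)) (xy_exponent n a b) =
    (\<Sum>m\<in>hk_exponents n k. \<Sum>\<sigma>\<in>perms n. if \<forall>i<n. ?p (\<sigma> i) - m i = a i \<and> ?q (\<sigma> i) = b i
       then of_int (sign \<sigma>) * (\<Prod>i<n. of_nat (falling_fact (?p (\<sigma> i)) (m i))) else 0)"
    unfolding n_def hk_diff_Delta_eq lookup_sum lookup_single when_def xy_exponent_eq_iff by simp
  also have "\<dots> =
    (\<Sum>\<sigma>\<in>perms n. \<Sum>m\<in>hk_exponents n k. if \<forall>i<n. ?p (\<sigma> i) - m i = a i \<and> ?q (\<sigma> i) = b i
       then of_int (sign \<sigma>) * (\<Prod>i<n. of_nat (falling_fact (?p (\<sigma> i)) (m i))) else 0)"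
    by (rule sum.swap)
  also have "\<dots> = (\<Sum>\<sigma>\<in>perms n. if ?C then ?K * (of_int (sign \<sigma>) * (\<Prod>i<n. ?B i (\<sigma> i))) else 0)"
  proof (intro sum.cong refl)
    fix \<sigma> assume \<sigma>: "\<sigma> \<in> perms n"
    note prod_falling_fact_perm[OF \<sigma>, of a ?p, where 'a = rat]
    moreover have "(\<Prod>i<n. ?B i (\<sigma> i)) = (if \<forall>i<n. ?q (\<sigma> i) = b i \<and> a i \<le> ?p (\<sigma> i) then 1 else 0)"
    proof (cases "\<forall>i<n. ?q (\<sigma> i) = b i \<and> a i \<le> ?p (\<sigma> i)")
      case False
      then obtain j where "j < n" "\<not> (?q (\<sigma> j) = b j \<and> a j \<le> ?p (\<sigma> j))" by auto
      then have "(\<Prod>i<n. ?B i (\<sigma> i)) = 0" by (intro prod_zero) auto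
      with False show ?thesis by simp
    qed simp
    moreover have "(\<Sum>i<n. ?p (\<sigma> i)) = (\<Sum>t<n. ?p t)" by (rule sum_perms_reindex[OF \<sigma>])
    ultimately show "(\<Sum>m\<in>hk_exponents n k. if \<forall>i<n. ?p (\<sigma> i) - m i = a i \<and> ?q (\<sigma> i) = b i
       then of_int (sign \<sigma>) * (\<Prod>i<n. of_nat (falling_fact (?p (\<sigma> i)) (m i))) else 0) =
       (if ?C then ?K * (of_int (sign \<sigma>) * (\<Prod>i<n. ?B i (\<sigma> i))) else 0)"
      unfolding sum_hk_exponents_collapse by auto
  qed
  also have "\<dots> = (if ?C then ?K * det (reach_mat L a b) else 0)"
    unfolding n_def det_reach_mat_perms by (simp add: sum_distrib_left)
  finally show ?thesis .
qed

section \<open>Enumerating the cells of a diagram\<close>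

definition cell_less :: "nat \<times> nat \<Rightarrow> nat \<times> nat \<Rightarrow> bool" (infix "\<prec>" 50) where
  "x \<prec> y \<longleftrightarrow> snd x < snd y \<or> (snd x = snd y \<and> fst x < fst y)"

definition cell_le :: "nat \<times> nat \<Rightarrow> nat \<times> nat \<Rightarrow> bool" (infix "\<preceq>" 50) where
  "x \<preceq> y \<longleftrightarrow> x \<prec> y \<or> x = y"

lemma cell_le_iff: "x \<preceq> y \<longleftrightarrow> snd x < snd y \<or> (snd x = snd y \<and> fst x \<le> fst y)"
  by (cases x; cases y) (auto simp: cell_le_def cell_less_def)

lemma cell_less_irrefl [simp]: "\<not> x \<prec> x"
  by (simp add: cell_less_def)

lemma cell_less_trans: "x \<prec> y \<Longrightarrow> y \<prec> z \<Longrightarrow> x \<prec> z"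
  by (auto simp: cell_less_def)

lemma cell_less_asym: "x \<prec> y \<Longrightarrow> \<not> y \<prec> x"
  by (auto simp: cell_less_def)

lemma not_cell_less: "\<not> x \<prec> y \<longleftrightarrow> y \<preceq> x"
  by (cases x; cases y) (auto simp: cell_le_def cell_less_def)

lemma cell_le_trans: "x \<preceq> y \<Longrightarrow> y \<preceq> z \<Longrightarrow> x \<preceq> z"
  by (auto simp: cell_le_def cell_less_def)

lemma cell_less_le_trans: "x \<prec> y \<Longrightarrow> y \<preceq> z \<Longrightarrow> x \<prec> z"
  by (auto simp: cell_le_def cell_less_def)

lemma cell_le_less_trans: "x \<preceq> y \<Longrightarrow> y \<prec> z \<Longrightarrow> x \<prec> z"
  by (auto simp: cell_le_def cell_less_def)

lemma swap_less_swap_iff: "prod.swap x < prod.swap y \<longleftrightarrow> x \<prec> y"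
  by (cases x; cases y) (auto simp: cell_less_def)

lemma cells_swap: "cells S = map prod.swap (sorted_list_of_set (prod.swap ` S))"
proof -
  have "(\<lambda>(p, q). (q, p)) = (prod.swap :: nat \<times> nat \<Rightarrow> _)" by auto
  then show ?thesis unfolding cells_def by simp
qed

lemma length_cells: "length (cells S) = card S"
  unfolding cells_swap by (simp add: card_image)

lemma set_cells: "finite S \<Longrightarrow> set (cells S) = S"
  unfolding cells_swap by (simp add: image_image)

lemma distinct_cells: "distinct (cells S)"
  unfolding cells_swap by (simp add: distinct_map)

lemma cells_less: "i < j \<Longrightarrow> j < card S \<Longrightarrow> cells S ! i \<prec> cells S ! j"
proof -
  assume ij: "i < j" "j < card S"
  let ?xs = "sorted_list_of_set (prod.swap ` S)"
  have len: "length ?xs = card S" using length_cells[of S] by (simp add: cells_swap)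
  with ij have "?xs ! i < ?xs ! j" by (intro sorted_wrt_nth_less[OF strict_sorted_list_of_set]) simp_all
  with ij len show ?thesis by (simp add: cells_swap swap_less_swap_iff[symmetric])
qed

lemma cells_less_iff: "i < card S \<Longrightarrow> j < card S \<Longrightarrow> cells S ! i \<prec> cells S ! j \<longleftrightarrow> i < j"
  using cells_less[of i j S] cells_less[of j i S] cell_less_asym
  by (cases i j rule: linorder_cases) auto

lemma cells_le: "i \<le> j \<Longrightarrow> j < card S \<Longrightarrow> cells S ! i \<preceq> cells S ! j"
  using cells_less[of i j S] by (cases "i = j") (auto simp: cell_le_def)

lemma bij_betw_cells: "finite S \<Longrightarrow> bij_betw (\<lambda>i. cells S ! i) {..<card S} S"
  using distinct_cells[of S] set_cells[of S] length_cells[of S]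
  by (simp add: bij_betw_nth lessThan_atLeast0)

lemma cells_in: "finite S \<Longrightarrow> i < card S \<Longrightarrow> cells S ! i \<in> S"
  using bij_betw_apply[OF bij_betw_cells] by blast

lemma cells_surj: "finite S \<Longrightarrow> x \<in> S \<Longrightarrow> \<exists>i<card S. cells S ! i = x"
  using bij_betw_imp_surj_on[OF bij_betw_cells, of S] by (metis imageE lessThan_iff)

lemma cells_eq_iff: "i < card S \<Longrightarrow> j < card S \<Longrightarrow> cells S ! i = cells S ! j \<longleftrightarrow> i = j"
  using distinct_cells[of S] length_cells[of S] by (simp add: nth_eq_iff_index_eq)

lemma sum_cells: "finite S \<Longrightarrow> sum f S = (\<Sum>s<card S. f (cells S ! s))"
  by (rule sum.reindex_bij_betw[OF bij_betw_cells, symmetric])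

lemma prod_cells: "finite S \<Longrightarrow> prod f S = (\<Prod>s<card S. f (cells S ! s))"
  by (rule prod.reindex_bij_betw[OF bij_betw_cells, symmetric])

lemma downward_closed_eq_lessThan:
  fixes D :: "nat set"
  assumes "finite D" "\<And>i j. i \<in> D \<Longrightarrow> j < i \<Longrightarrow> j \<in> D"
  shows "D = {..<card D}"
proof (cases "D = {}")
  case False
  define m where "m = Max D"
  have "D = {..m}"
  proof
    show "D \<subseteq> {..m}" using assms(1) by (auto simp: m_def)
    show "{..m} \<subseteq> D" using assms(2) Max_in[OF assms(1) False] by (auto simp: m_def le_less)
  qed
  then show ?thesis by (simp add: lessThan_Suc_atMost[symmetric])
qed simp

definition cell_rank :: "(nat \<times> nat) set \<Rightarrow> nat \<times> nat \<Rightarrow> nat" where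
  "cell_rank S x = card {y \<in> S. y \<prec> x}"

lemma cell_rank_le_card: "finite S \<Longrightarrow> cell_rank S x \<le> card S"
  unfolding cell_rank_def by (rule card_mono) auto

lemma cell_rank_mono: "finite S \<Longrightarrow> x \<preceq> y \<Longrightarrow> cell_rank S x \<le> cell_rank S y"
  unfolding cell_rank_def cell_le_def by (rule card_mono) (auto simp: cell_less_def)

lemma cells_less_iff_less_rank:
  assumes "finite S" "i < card S"
  shows "cells S ! i \<prec> x \<longleftrightarrow> i < cell_rank S x"
proof -
  define D where "D = {j. j < card S \<and> cells S ! j \<prec> x}"
  have "{y \<in> S. y \<prec> x} = (\<lambda>j. cells S ! j) ` D"
  proof
    show "{y \<in> S. y \<prec> x} \<subseteq> (\<lambda>j. cells S ! j) ` D"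
    proof
      fix y assume y: "y \<in> {y \<in> S. y \<prec> x}"
      then obtain j where "j < card S" "cells S ! j = y" using cells_surj[OF assms(1)] by blast
      with y show "y \<in> (\<lambda>j. cells S ! j) ` D" by (intro image_eqI[of _ _ j]) (auto simp: D_def)
    qed
    show "(\<lambda>j. cells S ! j) ` D \<subseteq> {y \<in> S. y \<prec> x}"
      using cells_in[OF assms(1)] by (auto simp: D_def)
  qed
  moreover have "inj_on (\<lambda>j. cells S ! j) D" using cells_eq_iff by (auto simp: D_def inj_on_def)
  ultimately have rank: "cell_rank S x = card D" by (simp add: cell_rank_def card_image)
  have D: "D = {..<card D}"
  proof (rule downward_closed_eq_lessThan)
    fix l j assume "l \<in> D" "j < l"
    then show "j \<in> D" using cell_less_trans[OF cells_less[of j l S]] by (auto simp: D_def)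
  qed (simp add: D_def)
  have "cells S ! i \<prec> x \<longleftrightarrow> i \<in> D" using assms(2) by (simp add: D_def)
  also have "\<dots> \<longleftrightarrow> i < card D" by (metis D lessThan_iff)
  finally show ?thesis using rank by simp
qed

lemma cell_rank_eqI:
  assumes fS: "finite S" and "s \<le> card S" and "\<And>t. t < card S \<Longrightarrow> cells S ! t \<prec> y \<longleftrightarrow> t < s"
  shows "cell_rank S y = s"
proof (cases "cell_rank S y" s rule: linorder_cases)
  case less
  with assms(2) have "cell_rank S y < card S" by simp
  with less show ?thesis using assms(3) cells_less_iff_less_rank[OF fS] by blast
next
  case greater
  with assms(2) cell_rank_le_card[OF fS, of y] have "s < card S" by simp
  with greater show ?thesis using assms(3) cells_less_iff_less_rank[OF fS] by blast
qed

lemma cell_rank_cells: "finite S \<Longrightarrow> i < card S \<Longrightarrow> cell_rank S (cells S ! i) = i"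
  by (rule cell_rank_eqI) (simp_all add: cells_less_iff)

section \<open>The dominance determinant\<close>

text \<open>\<open>row_dominated L S\<close> says that the \<open>s\<close>-th cell of \<open>S\<close> has rank \<open>s\<close> in \<open>L\<close> and lies in the row
  of the \<open>s\<close>-th cell of \<open>L\<close>, weakly to its left.\<close>

definition row_dominated :: "(nat \<times> nat) set \<Rightarrow> (nat \<times> nat) set \<Rightarrow> bool" where
  "row_dominated L S \<longleftrightarrow>
     (\<forall>u\<in>S. cell_rank L u = cell_rank S u \<and> (\<exists>c\<in>L. cell_rank L c = cell_rank S u \<and> snd c = snd u))"

definition dominance_mat :: "(nat \<times> nat) set \<Rightarrow> (nat \<times> nat) set \<Rightarrow> rat mat" where
  "dominance_mat L S = mat (card L) (card L) (\<lambda>(s, t).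
     if snd (cells L ! t) = snd (cells S ! s) \<and> fst (cells S ! s) \<le> fst (cells L ! t) then 1 else 0)"

lemma row_dominated_cells:
  assumes "finite L" "finite S" "card S = card L" "row_dominated L S" "s < card L"
  shows "cell_rank L (cells S ! s) = s \<and> snd (cells L ! s) = snd (cells S ! s)
    \<and> fst (cells S ! s) \<le> fst (cells L ! s)"
proof -
  let ?u = "cells S ! s"
  have "?u \<in> S" "cell_rank S ?u = s"
    using cells_in[OF assms(2)] cell_rank_cells[OF assms(2)] assms(3,5) by simp_all
  then obtain c where c: "c \<in> L" "cell_rank L c = s" "snd c = snd ?u" and rank: "cell_rank L ?u = s"
    using assms(4) unfolding row_dominated_def by auto
  obtain j where "j < card L" "cells L ! j = c" using cells_surj[OF assms(1) c(1)] by blast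
  with c(2) cell_rank_cells[OF assms(1)] have cs: "cells L ! s = c" by auto
  have "\<not> cells L ! s \<prec> ?u" using cells_less_iff_less_rank[OF assms(1,5)] rank by simp
  then show ?thesis using rank cs c(3) by (auto simp: not_cell_less cell_le_def cell_less_def)
qed

lemma row_dominatedI:
  assumes "finite L" "finite S" "card S = card L"
    and "\<And>s. s < card L \<Longrightarrow> cell_rank L (cells S ! s) = s \<and> snd (cells L ! s) = snd (cells S ! s)"
  shows "row_dominated L S"
  unfolding row_dominated_def
proof
  fix u assume "u \<in> S"
  then obtain s where s: "s < card L" "cells S ! s = u"
    using cells_surj[OF assms(2) \<open>u \<in> S\<close>] assms(3) by auto
  have "cell_rank S u = s" using cell_rank_cells[OF assms(2)] s assms(3) by auto
  moreover have "cell_rank L u = s" "snd (cells L ! s) = snd u" using assms(4)[OF s(1)] s(2) by auto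
  moreover have "cells L ! s \<in> L" "cell_rank L (cells L ! s) = s"
    using cells_in[OF assms(1) s(1)] cell_rank_cells[OF assms(1) s(1)] by auto
  ultimately show "cell_rank L u = cell_rank S u \<and> (\<exists>c\<in>L. cell_rank L c = cell_rank S u \<and> snd c = snd u)"
    by auto
qed

lemma det_dominance_mat_row_dominated:
  assumes "finite L" "finite S" "card S = card L" "row_dominated L S"
  shows "det (dominance_mat L S) = 1"
proof -
  note dom = row_dominated_cells[OF assms]
  have "upper_triangular (dominance_mat L S)"
    unfolding upper_triangular_def
  proof (intro allI impI)
    fix s t assume "s < dim_row (dominance_mat L S)" "t < s"
    then have "s < card L" "t < s" by (simp_all add: dominance_mat_def)
    then have "cells L ! t \<prec> cells S ! s"
      using cells_less_iff_less_rank[OF assms(1), of t "cells S ! s"] dom by simp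
    with \<open>s < card L\<close> \<open>t < s\<close> show "dominance_mat L S $$ (s, t) = 0"
      by (auto simp: dominance_mat_def cell_less_def)
  qed
  then have "det (dominance_mat L S) = prod_list (diag_mat (dominance_mat L S))"
    by (rule det_upper_triangular[of _ "card L"]) (simp add: dominance_mat_def)
  also have "\<dots> = (\<Prod>i = 0..<card L. dominance_mat L S $$ (i, i))"
    by (simp add: prod_list_diag_prod dominance_mat_def)
  also have "\<dots> = 1"
    by (rule prod.neutral) (use dom in \<open>auto simp: dominance_mat_def\<close>)
  finally show ?thesis .
qed

lemma det_nonzero_imp_perm:
  assumes "A \<in> carrier_mat n n" "det A \<noteq> 0"
  shows "\<exists>\<sigma>\<in>perms n. \<forall>s<n. A $$ (s, \<sigma> s) \<noteq> 0"
proof -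
  have "\<not> (\<forall>\<sigma>\<in>perms n. (\<Prod>i<n. A $$ (i, \<sigma> i)) = 0)"
  proof
    assume "\<forall>\<sigma>\<in>perms n. (\<Prod>i<n. A $$ (i, \<sigma> i)) = 0"
    then have "det A = 0" by (simp add: det_perms[OF assms(1)])
    with assms(2) show False ..
  qed
  then obtain \<sigma> where \<sigma>: "\<sigma> \<in> perms n" "(\<Prod>i<n. A $$ (i, \<sigma> i)) \<noteq> 0" by blast
  have "A $$ (s, \<sigma> s) \<noteq> 0" if "s < n" for s
  proof
    assume "A $$ (s, \<sigma> s) = 0"
    then have "(\<Prod>i<n. A $$ (i, \<sigma> i)) = 0" using that by (intro prod_zero) auto
    with \<sigma>(2) show False ..
  qed
  with \<sigma>(1) show ?thesis by blast
qed

text \<open>Pigeonhole: a permutation supported on monotone intervals forces \<open>lo s \<le> s < hi s\<close>.\<close>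

lemma perm_within_monotone_intervals:
  fixes lo hi :: "nat \<Rightarrow> nat"
  assumes \<sigma>: "\<sigma> \<in> perms n" and within: "\<And>s. s < n \<Longrightarrow> lo s \<le> \<sigma> s \<and> \<sigma> s < hi s"
    and mono: "\<And>s s'. s \<le> s' \<Longrightarrow> s' < n \<Longrightarrow> lo s \<le> lo s' \<and> hi s \<le> hi s'"
    and s: "s < n"
  shows "lo s \<le> s \<and> s < hi s"
proof
  have inj: "inj_on \<sigma> A" for A
    using permutes_inj[of \<sigma> "{0..<n}"] \<sigma> by (auto simp: perms_def intro: inj_on_subset)
  have "lo s \<le> \<sigma> s'" if "s \<le> s'" "s' < n" for s'
    using within[of s'] mono[OF that] that by simp
  then have "\<sigma> ` {s..<n} \<subseteq> {lo s..<n}" using perms_less[OF \<sigma>] by auto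
  then have "card {s..<n} \<le> card {lo s..<n}" by (intro card_inj_on_le[OF inj]) auto
  then show "lo s \<le> s" using s by simp
  have "\<sigma> s' < hi s" if "s' \<le> s" for s'
    using within[of s'] mono[OF that s] that s by simp
  then have "\<sigma> ` {0..s} \<subseteq> {0..<hi s}" by auto
  then have "card {0..s} \<le> card {0..<hi s}" by (intro card_inj_on_le[OF inj]) auto
  then show "s < hi s" by simp
qed

definition row_end_rank :: "(nat \<times> nat) set \<Rightarrow> nat \<times> nat \<Rightarrow> nat" where
  "row_end_rank L x = cell_rank L (0, Suc (snd x))"

lemma dominance_mat_entry:
  assumes "finite L" "s < card L" "t < card L"
  shows "dominance_mat L S $$ (s, t) = (if cell_rank L (cells S ! s) \<le> t
    \<and> t < row_end_rank L (cells S ! s) then 1 else 0)"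
  using assms cells_less_iff_less_rank[OF assms(1,3), of "cells S ! s"]
    cells_less_iff_less_rank[OF assms(1,3), of "(0, Suc (snd (cells S ! s)))"]
  by (auto simp: dominance_mat_def row_end_rank_def cell_less_def not_less)

lemma dominance_rank_bounds:
  assumes fL: "finite L" and cS: "card S = card L" and nz: "det (dominance_mat L S) \<noteq> 0"
    and s: "s < card L"
  shows "cell_rank L (cells S ! s) \<le> s \<and> s < row_end_rank L (cells S ! s)"
proof -
  have "dominance_mat L S \<in> carrier_mat (card L) (card L)" by (simp add: dominance_mat_def)
  then obtain \<sigma> where \<sigma>: "\<sigma> \<in> perms (card L)"
    "\<And>s. s < card L \<Longrightarrow> dominance_mat L S $$ (s, \<sigma> s) \<noteq> 0"
    using det_nonzero_imp_perm nz by blast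
  show ?thesis
  proof (rule perm_within_monotone_intervals[OF \<sigma>(1) _ _ s])
    fix s assume "s < card L"
    then show "cell_rank L (cells S ! s) \<le> \<sigma> s \<and> \<sigma> s < row_end_rank L (cells S ! s)"
      using \<sigma>(2)[of s] dominance_mat_entry[OF fL, of s "\<sigma> s"] perms_less[OF \<sigma>(1), of s]
      by (auto split: if_splits)
  next
    fix s s' assume "s \<le> s'" "s' < card L"
    then have "cells S ! s \<preceq> cells S ! s'" using cells_le[of s s' S] cS by simp
    then show "cell_rank L (cells S ! s) \<le> cell_rank L (cells S ! s')
        \<and> row_end_rank L (cells S ! s) \<le> row_end_rank L (cells S ! s')"
      using cell_rank_mono[OF fL] by (auto simp: row_end_rank_def cell_le_iff)
  qed
qed

lemma row_dominated_of_det_nonzero: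
  assumes fL: "finite L" and fS: "finite S" and cS: "card S = card L"
    and nz: "det (dominance_mat L S) \<noteq> 0"
  shows "row_dominated L S"
proof -
  let ?n = "card L" and ?d = "\<lambda>s. cells S ! s" and ?c = "\<lambda>t. cells L ! t"
  note bounds = dominance_rank_bounds[OF fL cS nz]
  have same_row: "snd (?c s) = snd (?d s)" if "s < ?n" "cell_rank L (?d s) = s" for s
  proof -
    have "?c s \<prec> (0, Suc (snd (?d s)))" "\<not> ?c s \<prec> ?d s"
      using cells_less_iff_less_rank[OF fL \<open>s < ?n\<close>] bounds[OF \<open>s < ?n\<close>] that(2)
      by (simp_all add: row_end_rank_def)
    then show ?thesis by (auto simp: cell_less_def)
  qed
  have "cell_rank L (?d s) = s" if "s < ?n" for s
    using that
  proof (induction s)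
    case 0
    then show ?case using bounds[of 0] by simp
  next
    case (Suc s)
    have ih: "cell_rank L (?d s) = s" using Suc by simp
    have le: "?d s \<preceq> ?d (Suc s)" using cells_le[of s "Suc s" S] Suc.prems cS by simp
    then have "s \<le> cell_rank L (?d (Suc s))" using cell_rank_mono[OF fL le] ih by simp
    moreover have "cell_rank L (?d (Suc s)) \<noteq> s"
    proof
      assume rank_eq: "cell_rank L (?d (Suc s)) = s"
      \<comment> \<open>then the cell \<open>c\<^sub>s\<close> separates \<open>d\<^sub>s\<close> and \<open>d\<^sub>s\<^sub>+\<^sub>1\<close>, forcing them into one row, so rows \<open>s\<close>
          and \<open>s + 1\<close> of the matrix coincide\<close>
      have "\<not> ?c s \<prec> ?d (Suc s)" using cells_less_iff_less_rank[OF fL] Suc.prems rank_eq by simp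
      with same_row[of s] Suc.prems ih le have "snd (?d (Suc s)) = snd (?d s)"
        by (auto simp: cell_less_def cell_le_iff)
      then have "dominance_mat L S $$ (s, t) = dominance_mat L S $$ (Suc s, t)" if "t < ?n" for t
        using dominance_mat_entry[OF fL _ that, of s S] dominance_mat_entry[OF fL _ that, of "Suc s" S]
          Suc.prems ih rank_eq by (simp add: row_end_rank_def)
      then have "row (dominance_mat L S) s = row (dominance_mat L S) (Suc s)"
        using Suc.prems by (intro eq_vecI) (simp_all add: dominance_mat_def)
      then have "det (dominance_mat L S) = 0"
        using Suc.prems by (intro det_identical_rows[of _ ?n s "Suc s"]) (simp_all add: dominance_mat_def)
      with nz show False ..
    qed
    ultimately show ?case using bounds[OF Suc.prems] by simp
  qed
  with same_row show ?thesis
    using fL fS cS by (intro row_dominatedI) auto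
qed

lemma det_dominance_mat:
  "finite L \<Longrightarrow> finite S \<Longrightarrow> card S = card L \<Longrightarrow>
    det (dominance_mat L S) = (if row_dominated L S then 1 else 0)"
  using det_dominance_mat_row_dominated row_dominated_of_det_nonzero by auto

section \<open>The diagrams \<open>h\<^sub>k(i\<^sub>1,\<dots>,i\<^sub>k;L)\<close>\<close>

definition step_right :: "nat \<times> nat \<Rightarrow> nat \<times> nat" where
  "step_right x = (Suc (fst x), snd x)"

lemma inj_step_right: "inj step_right"
  by (auto simp: inj_def step_right_def prod_eq_iff)

lemma cell_less_step_right: "x \<prec> step_right x"
  by (simp add: cell_less_def step_right_def)

lemma cell_less_iff_step_right: "x \<prec> y \<longleftrightarrow> step_right x \<prec> y \<or> step_right x = y"
  by (cases x; cases y) (auto simp: cell_less_def step_right_def)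

lemma cell_less_step_right_imp_le: "y \<prec> step_right x \<Longrightarrow> y \<preceq> x"
  by (cases x; cases y) (auto simp: cell_less_def cell_le_def step_right_def)

lemma hk_diag_eq: "hk_diag L R = (L \<union> R) - step_right ` R"
proof -
  have "(\<lambda>(p, q). (p + 1, q)) = step_right" by (auto simp: step_right_def)
  then show ?thesis unfolding hk_diag_def by auto
qed

lemma step_right_image_subset:
  assumes "finite L" "R \<subseteq> - L" "finite R" "card (hk_diag L R) = card L"
  shows "step_right ` R \<subseteq> L \<union> R"
proof (rule ccontr)
  assume "\<not> step_right ` R \<subseteq> L \<union> R"
  then have "card ((L \<union> R) \<inter> step_right ` R) < card (step_right ` R)"
    using assms(3) by (intro psubset_card_mono) auto
  also have "card (step_right ` R) = card R"
    using inj_step_right by (simp add: card_image inj_on_subset)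
  finally have "card ((L \<union> R) \<inter> step_right ` R) < card R" .
  moreover have "card (hk_diag L R) = card (L \<union> R) - card ((L \<union> R) \<inter> step_right ` R)"
    unfolding hk_diag_eq using assms(1,3) by (simp add: card_Diff_subset_Int)
  moreover have "card (L \<union> R) = card L + card R"
    using assms(1-3) by (subst card_Un_disjoint) auto
  ultimately show False using assms(4) by simp
qed

context
  fixes L R :: "(nat \<times> nat) set"
  assumes fL: "finite L" and RL: "R \<subseteq> - L" and fR: "finite R"
    and closed: "step_right ` R \<subseteq> L \<union> R"
begin

lemma sum_fst_hk_diag: "sum fst (hk_diag L R) + card R = sum fst L"
proof -
  have "sum fst (L \<union> R) = sum fst ((L \<union> R) - step_right ` R) + sum fst (step_right ` R)"
    using closed fL fR by (intro sum.subset_diff) auto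
  moreover have "sum fst (L \<union> R) = sum fst L + sum fst R"
    using fL fR RL by (subst sum.union_disjoint) auto
  moreover have "sum fst (step_right ` R) = sum fst R + card R"
    using sum.reindex[OF inj_on_subset[OF inj_step_right subset_UNIV], of fst R]
    by (simp add: step_right_def sum_Suc)
  ultimately show ?thesis unfolding hk_diag_eq by simp
qed

lemma cell_rank_hk_diag:
  "cell_rank (hk_diag L R) y = cell_rank L y + (if y \<in> step_right ` R then 1 else 0)"
proof -
  let ?A = "{z \<in> L \<union> R. z \<prec> y}" and ?B = "{z \<in> step_right ` R. z \<prec> y}"
    and ?R' = "{r \<in> R. step_right r \<prec> y}" and ?E = "{r \<in> R. step_right r = y}"
  have "{z \<in> hk_diag L R. z \<prec> y} = ?A - ?B" unfolding hk_diag_eq by blast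
  moreover have "?B \<subseteq> ?A" using closed by blast
  moreover have "finite ?A" using fL fR by simp
  ultimately have "cell_rank (hk_diag L R) y = card ?A - card ?B"
    unfolding cell_rank_def by (simp add: card_Diff_subset finite_subset)
  moreover have "card ?A = cell_rank L y + card {z \<in> R. z \<prec> y}"
  proof -
    have "?A = {z \<in> L. z \<prec> y} \<union> {z \<in> R. z \<prec> y}" by blast
    moreover have "card ({z \<in> L. z \<prec> y} \<union> {z \<in> R. z \<prec> y}) = card {z \<in> L. z \<prec> y} + card {z \<in> R. z \<prec> y}"
      using fL fR RL by (intro card_Un_disjoint) auto
    ultimately show ?thesis by (simp add: cell_rank_def)
  qed
  moreover have "?B = step_right ` ?R'" by blast
  then have "card ?B = card ?R'"
    using inj_step_right by (simp add: card_image inj_on_subset)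
  moreover have "card {z \<in> R. z \<prec> y} = card ?R' + card ?E"
  proof -
    have "{z \<in> R. z \<prec> y} = ?R' \<union> ?E" using cell_less_iff_step_right by blast
    moreover have "card (?R' \<union> ?E) = card ?R' + card ?E"
      using fR by (intro card_Un_disjoint) auto
    ultimately show ?thesis by simp
  qed
  moreover have "card ?E = (if y \<in> step_right ` R then 1 else 0)"
  proof (cases "y \<in> step_right ` R")
    case True
    then obtain r where "r \<in> R" "step_right r = y" by auto
    then have "?E = {r}" by (auto dest: injD[OF inj_step_right])
    then show ?thesis using True by simp
  next
    case False
    then have "?E = {}" by blast
    then show ?thesis using False by (simp only: card.empty if_False)
  qed
  ultimately show ?thesis by simp
qed

lemma row_run_to_L:
  assumes "x \<in> L \<union> R"
  shows "\<exists>c\<in>L. snd c = snd x \<and> fst x \<le> fst c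
    \<and> (\<forall>z. snd z = snd x \<and> fst x \<le> fst z \<and> fst z < fst c \<longrightarrow> z \<in> R)"
  using assms
proof (induction "Suc (Max (fst ` R)) - fst x" arbitrary: x rule: less_induct)
  case less
  show ?case
  proof (cases "x \<in> L")
    case False
    then have xR: "x \<in> R" using less.prems by auto
    then have "Suc (Max (fst ` R)) - fst (step_right x) < Suc (Max (fst ` R)) - fst x"
      using fR Max_ge[of "fst ` R" "fst x"] by (simp add: step_right_def Suc_diff_le)
    moreover have "step_right x \<in> L \<union> R" using closed xR by auto
    ultimately obtain c where c: "c \<in> L" "snd c = snd x" "Suc (fst x) \<le> fst c"
      and run: "\<forall>z. snd z = snd x \<and> Suc (fst x) \<le> fst z \<and> fst z < fst c \<longrightarrow> z \<in> R"
      using less.hyps[of "step_right x"] by (auto simp: step_right_def)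
    have "z \<in> R" if "snd z = snd x" "fst x \<le> fst z" "fst z < fst c" for z
    proof (cases "fst z = fst x")
      case True
      with that(1) have "z = x" by (simp add: prod_eq_iff)
      with xR show ?thesis by simp
    qed (use that run in \<open>cases z, auto\<close>)
    with c show ?thesis by auto
  qed auto
qed

lemma row_dominated_hk_diag: "row_dominated L (hk_diag L R)"
  unfolding row_dominated_def
proof
  fix u assume u: "u \<in> hk_diag L R"
  then have "u \<notin> step_right ` R" "u \<in> L \<union> R" unfolding hk_diag_eq by blast+
  then have rank: "cell_rank (hk_diag L R) u = cell_rank L u"
    and "\<exists>c\<in>L. snd c = snd u \<and> fst u \<le> fst c
           \<and> (\<forall>z. snd z = snd u \<and> fst u \<le> fst z \<and> fst z < fst c \<longrightarrow> z \<in> R)"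
    using cell_rank_hk_diag[of u] row_run_to_L by simp_all
  then obtain c where c: "c \<in> L" "snd c = snd u" "fst u \<le> fst c"
    and run: "\<And>z. snd z = snd u \<Longrightarrow> fst u \<le> fst z \<Longrightarrow> fst z < fst c \<Longrightarrow> z \<in> R"
    by blast
  \<comment> \<open>the cells between \<open>u\<close> and \<open>c\<close> lie in \<open>R\<close>, hence not in \<open>L\<close>\<close>
  have "{z \<in> L. z \<prec> c} = {z \<in> L. z \<prec> u}"
  proof (intro Collect_cong conj_cong refl iffI)
    fix z assume "z \<in> L" "z \<prec> c"
    show "z \<prec> u"
    proof (rule ccontr)
      assume "\<not> z \<prec> u"
      with \<open>z \<prec> c\<close> c(2) have "z \<in> R"
        by (intro run) (auto simp: cell_less_def not_less)
      with \<open>z \<in> L\<close> RL show False by blast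
    qed
  next
    fix z assume "z \<prec> u"
    with c(2,3) show "z \<prec> c" by (auto simp: cell_less_def)
  qed
  then have "cell_rank L c = cell_rank L u" by (simp add: cell_rank_def)
  with rank c show "cell_rank L u = cell_rank (hk_diag L R) u
      \<and> (\<exists>c\<in>L. cell_rank L c = cell_rank (hk_diag L R) u \<and> snd c = snd u)"
    by auto
qed

end

text \<open>The cells of the complement of \<open>L\<close> that must be moved to obtain \<open>S\<close>; they are recognised by
  the jump of the rank at their right neighbour.\<close>

definition moved_cells :: "(nat \<times> nat) set \<Rightarrow> (nat \<times> nat) set \<Rightarrow> (nat \<times> nat) set" where
  "moved_cells L S = {x. cell_rank S (step_right x) = cell_rank L (step_right x) + 1}"

lemma moved_cells_hk_diag:
  assumes "finite L" "R \<subseteq> - L" "finite R" "step_right ` R \<subseteq> L \<union> R"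
  shows "moved_cells L (hk_diag L R) = R"
  using cell_rank_hk_diag[OF assms] inj_image_mem_iff[OF inj_step_right]
  by (auto simp: moved_cells_def)

definition left_of_cells :: "(nat \<times> nat) set \<Rightarrow> (nat \<times> nat) set" where
  "left_of_cells L = {x. \<exists>c\<in>L. snd x = snd c \<and> fst x < fst c}"

lemma finite_left_of_cells: "finite L \<Longrightarrow> finite (left_of_cells L)"
proof -
  assume "finite L"
  have "left_of_cells L \<subseteq> (\<Union>c\<in>L. {..<fst c} \<times> {snd c})"
    by (auto simp: left_of_cells_def mem_Times_iff)
  moreover have "finite (\<Union>c\<in>L. {..<fst c} \<times> {snd c})" using \<open>finite L\<close> by auto
  ultimately show ?thesis by (rule finite_subset)
qed

lemma valid_sets_subset_left_of_cells:
  assumes "finite L" "R \<in> valid_sets L k"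
  shows "R \<subseteq> left_of_cells L"
proof
  fix x assume "x \<in> R"
  have RL: "R \<subseteq> - L" and fR: "finite R" and "card (hk_diag L R) = card L"
    using assms(2) by (auto simp: valid_sets_def)
  then have "step_right ` R \<subseteq> L \<union> R" using step_right_image_subset assms(1) by blast
  then obtain c where "c \<in> L" "snd c = snd x" "fst x \<le> fst c"
    using row_run_to_L[OF assms(1) RL fR, of x] \<open>x \<in> R\<close> by blast
  moreover have "x \<noteq> c" using \<open>x \<in> R\<close> \<open>c \<in> L\<close> RL by auto
  ultimately have "fst x < fst c" by (auto simp: prod_eq_iff)
  with \<open>c \<in> L\<close> \<open>snd c = snd x\<close> show "x \<in> left_of_cells L"
    unfolding left_of_cells_def by (intro CollectI bexI[of _ c]) auto
qed

lemma finite_valid_sets: "finite L \<Longrightarrow> finite (valid_sets L k)"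
  using valid_sets_subset_left_of_cells finite_left_of_cells
  by (metis Pow_iff finite_Pow_iff rev_finite_subset subsetI)

section \<open>Recovering the moved cells from a dominated diagram\<close>

context
  fixes L S :: "(nat \<times> nat) set"
  assumes fL: "finite L" and fS: "finite S" and cS: "card S = card L"
    and dom: "row_dominated L S"
begin

lemma dominated_cells:
  "s < card L \<Longrightarrow> cell_rank L (cells S ! s) = s \<and> snd (cells L ! s) = snd (cells S ! s)
     \<and> fst (cells S ! s) \<le> fst (cells L ! s)"
  using row_dominated_cells[OF fL fS cS dom] by blast

lemma dominated_cells_le: "s < card L \<Longrightarrow> cells S ! s \<preceq> cells L ! s"
  using dominated_cells[of s] by (cases "cells S ! s = cells L ! s") (auto simp: cell_le_def cell_less_def prod_eq_iff)

lemma cell_rank_L_in_segment: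
  assumes s: "s < card L" "cells S ! s \<prec> y" "y \<preceq> cells L ! s"
  shows "cell_rank L y = s"
proof (rule cell_rank_eqI[OF fL])
  fix t assume t: "t < card L"
  show "cells L ! t \<prec> y \<longleftrightarrow> t < s"
  proof
    assume "cells L ! t \<prec> y"
    show "t < s"
    proof (rule ccontr)
      assume "\<not> t < s"
      then have "y \<preceq> cells L ! t" using cell_le_trans[OF s(3) cells_le[of s t L]] t by simp
      with \<open>cells L ! t \<prec> y\<close> show False by (simp add: not_cell_less[symmetric])
    qed
  next
    assume "t < s"
    then have "cells L ! t \<prec> cells S ! s"
      using cells_less_iff_less_rank[OF fL t] dominated_cells[OF s(1)] by simp
    then show "cells L ! t \<prec> y" using s(2) cell_less_trans by blast
  qed
qed (use s in simp)

lemma cell_rank_S_in_segment: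
  assumes s: "s < card L" "cells S ! s \<prec> y" "y \<preceq> cells L ! s"
  shows "cell_rank S y = s + 1"
proof (rule cell_rank_eqI[OF fS])
  fix t assume t: "t < card S"
  show "cells S ! t \<prec> y \<longleftrightarrow> t < s + 1"
  proof
    assume "cells S ! t \<prec> y"
    show "t < s + 1"
    proof (rule ccontr)
      assume "\<not> t < s + 1"
      then have "cells L ! s \<prec> cells S ! t"
        using cells_less_iff_less_rank[OF fL s(1)] dominated_cells[of t] t cS by simp
      with s(3) have "y \<prec> cells S ! t" by (rule cell_le_less_trans)
      with \<open>cells S ! t \<prec> y\<close> show False by (simp add: cell_less_asym)
    qed
  next
    assume "t < s + 1"
    then show "cells S ! t \<prec> y"
      using cell_le_less_trans[OF cells_le[of t s S] s(2)] s(1) cS by simp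
  qed
qed (use s cS in simp)

lemma rank_jump_iff:
  "cell_rank S y = cell_rank L y + 1 \<longleftrightarrow> (\<exists>s<card L. cells S ! s \<prec> y \<and> y \<preceq> cells L ! s)"
proof
  assume jump: "cell_rank S y = cell_rank L y + 1"
  define s where "s = cell_rank L y"
  have s: "s < card L" using cell_rank_le_card[OF fS, of y] jump cS by (simp add: s_def)
  have "cells S ! s \<prec> y" using cells_less_iff_less_rank[OF fS, of s y] s jump cS by (simp add: s_def)
  moreover have "y \<preceq> cells L ! s"
    using cells_less_iff_less_rank[OF fL s, of y] by (simp add: s_def not_cell_less[symmetric])
  ultimately show "\<exists>s<card L. cells S ! s \<prec> y \<and> y \<preceq> cells L ! s" using s by blast
next
  assume "\<exists>s<card L. cells S ! s \<prec> y \<and> y \<preceq> cells L ! s"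
  then obtain s where "s < card L" "cells S ! s \<prec> y" "y \<preceq> cells L ! s" by blast
  from cell_rank_L_in_segment[OF this] cell_rank_S_in_segment[OF this]
  show "cell_rank S y = cell_rank L y + 1" by simp
qed

lemma rank_jump_row:
  assumes "cell_rank S y = cell_rank L y + 1"
  obtains s where "s < card L" "cells S ! s \<prec> y" "y \<preceq> cells L ! s" "snd y = snd (cells S ! s)"
    "fst (cells S ! s) < fst y" "fst y \<le> fst (cells L ! s)"
proof -
  from rank_jump_iff[THEN iffD1, OF assms]
  obtain s where s: "s < card L" "cells S ! s \<prec> y" "y \<preceq> cells L ! s" by blast
  moreover have "snd y = snd (cells S ! s) \<and> fst (cells S ! s) < fst y \<and> fst y \<le> fst (cells L ! s)"
    using s(2,3) dominated_cells[OF s(1)] unfolding cell_le_iff cell_less_def by auto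
  ultimately show ?thesis using that by blast
qed

lemma step_right_moved_cells:
  "step_right ` moved_cells L S = {y. cell_rank S y = cell_rank L y + 1}"
proof (intro equalityI subsetI)
  fix y assume "y \<in> {y. cell_rank S y = cell_rank L y + 1}"
  then have jump: "cell_rank S y = cell_rank L y + 1" by simp
  then obtain s where "fst (cells S ! s) < fst y" by (rule rank_jump_row)
  then have y: "y = step_right (fst y - 1, snd y)" by (simp add: step_right_def prod_eq_iff)
  with jump have "(fst y - 1, snd y) \<in> moved_cells L S" by (simp add: moved_cells_def)
  with y show "y \<in> step_right ` moved_cells L S" by blast
qed (auto simp: moved_cells_def)

lemma cells_mem_L_or_moved_cells:
  assumes "x \<in> S"
  shows "x \<in> L \<union> moved_cells L S"
proof -
  obtain s where s: "s < card L" "cells S ! s = x" using cells_surj[OF fS assms] cS by auto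
  show ?thesis
  proof (cases "x = cells L ! s")
    case True
    then show ?thesis using cells_in[OF fL s(1)] by simp
  next
    case False
    then have "step_right x \<preceq> cells L ! s"
      using dominated_cells[OF s(1)] s(2)
      by (auto simp: cell_le_iff step_right_def prod_eq_iff)
    then have "cell_rank S (step_right x) = cell_rank L (step_right x) + 1"
      by (intro rank_jump_iff[THEN iffD2] exI[of _ s]) (use s cell_less_step_right[of x] in auto)
    then show ?thesis by (simp add: moved_cells_def)
  qed
qed

lemma no_rank_jump_on_cells:
  assumes "x \<in> S"
  shows "cell_rank S x \<noteq> cell_rank L x + 1"
proof -
  obtain s where "s < card L" "cells S ! s = x" using cells_surj[OF fS assms] cS by auto
  then show ?thesis using cell_rank_cells[OF fS, of s] dominated_cells[of s] cS by simp
qed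

lemma mem_cells_of_no_rank_jump:
  assumes "x \<in> L \<union> moved_cells L S" "cell_rank S x \<noteq> cell_rank L x + 1"
  shows "x \<in> S"
proof (rule ccontr)
  assume "x \<notin> S"
  from assms(1) obtain s where s: "s < card L" "cells S ! s \<prec> x" "x \<preceq> cells L ! s"
  proof
    assume "x \<in> L"
    then obtain t where t: "t < card L" "cells L ! t = x" using cells_surj[OF fL] by blast
    then have "cells S ! t \<noteq> x" using cells_in[OF fS, of t] cS \<open>x \<notin> S\<close> by auto
    then show thesis using that[OF t(1)] dominated_cells_le[OF t(1)] t(2) by (simp add: cell_le_def)
  next
    assume "x \<in> moved_cells L S"
    then have "cell_rank S (step_right x) = cell_rank L (step_right x) + 1"
      by (simp add: moved_cells_def)
    then obtain s where s: "s < card L" "cells S ! s \<prec> step_right x" "step_right x \<preceq> cells L ! s"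
      unfolding rank_jump_iff by blast
    have "cells S ! s \<noteq> x" using cells_in[OF fS] s(1) cS \<open>x \<notin> S\<close> by auto
    with cell_less_step_right_imp_le[OF s(2)] have "cells S ! s \<prec> x" by (simp add: cell_le_def)
    moreover have "x \<preceq> cells L ! s"
      using cell_less_le_trans[OF cell_less_step_right s(3)] by (simp add: cell_le_def)
    ultimately show thesis using that s(1) by blast
  qed
  then have "cell_rank S x = cell_rank L x + 1"
    by (intro rank_jump_iff[THEN iffD2] exI[of _ s]) auto
  with assms(2) show False ..
qed

lemma hk_diag_moved_cells: "hk_diag L (moved_cells L S) = S"
proof (intro equalityI subsetI)
  fix x assume "x \<in> hk_diag L (moved_cells L S)"
  then show "x \<in> S"
    unfolding hk_diag_eq step_right_moved_cells by (blast intro: mem_cells_of_no_rank_jump)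
next
  fix x assume "x \<in> S"
  then show "x \<in> hk_diag L (moved_cells L S)"
    unfolding hk_diag_eq step_right_moved_cells
    using cells_mem_L_or_moved_cells no_rank_jump_on_cells by blast
qed

lemma moved_cells_disjoint: "moved_cells L S \<subseteq> - L"
proof
  fix x assume "x \<in> moved_cells L S"
  then have "cell_rank S (step_right x) = cell_rank L (step_right x) + 1"
    by (simp add: moved_cells_def)
  then obtain s where s: "s < card L" "cells S ! s \<prec> step_right x" "step_right x \<preceq> cells L ! s"
    unfolding rank_jump_iff by blast
  show "x \<in> - L"
  proof
    assume "x \<in> L"
    then obtain t where t: "t < card L" "cells L ! t = x" using cells_surj[OF fL] by blast
    have "cells L ! t \<prec> cells L ! s"
      using cell_less_le_trans[OF cell_less_step_right[of x] s(3)] t(2) by simp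
    then have "cells L ! t \<prec> cells S ! s"
      using cells_less_iff_less_rank[OF fL t(1)] cells_less_iff[OF t(1) s(1)] dominated_cells[OF s(1)] by simp
    moreover have "cells S ! s \<preceq> cells L ! t" using cell_less_step_right_imp_le[OF s(2)] t(2) by simp
    ultimately have "cells L ! t \<prec> cells L ! t" by (rule cell_less_le_trans)
    then show False by simp
  qed
qed

lemma moved_cells_subset_left_of_cells: "moved_cells L S \<subseteq> left_of_cells L"
proof
  fix x assume "x \<in> moved_cells L S"
  then have "cell_rank S (step_right x) = cell_rank L (step_right x) + 1"
    by (simp add: moved_cells_def)
  then obtain s where s: "s < card L" "snd (step_right x) = snd (cells S ! s)"
    "fst (step_right x) \<le> fst (cells L ! s)"
    by (rule rank_jump_row)
  with dominated_cells[OF s(1)] show "x \<in> left_of_cells L"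
    unfolding left_of_cells_def
    by (intro CollectI bexI[of _ "cells L ! s"] cells_in[OF fL]) (auto simp: step_right_def)
qed

end

section \<open>Comparing coefficients\<close>

lemma valid_setsD:
  assumes "finite L" "R \<in> valid_sets L k"
  shows "R \<subseteq> - L" "finite R" "card R = k" "step_right ` R \<subseteq> L \<union> R"
    "finite (hk_diag L R)" "card (hk_diag L R) = card L"
  using assms step_right_image_subset[OF assms(1)] by (auto simp: valid_sets_def)

lemma row_dominated_valid_set:
  "finite L \<Longrightarrow> R \<in> valid_sets L k \<Longrightarrow> row_dominated L (hk_diag L R)"
  by (rule row_dominated_hk_diag[OF _ valid_setsD(1,2,4)])

lemma valid_sets_fibre:
  assumes fL: "finite L" and fS: "finite S" and cS: "card S = card L"
  shows "{R \<in> valid_sets L k. hk_diag L R = S} =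
    (if row_dominated L S \<and> sum fst L = sum fst S + k then {moved_cells L S} else {})"
proof -
  have "row_dominated L S \<and> sum fst L = sum fst S + k \<and> R = moved_cells L S"
    if R: "R \<in> valid_sets L k" and S: "hk_diag L R = S" for R
    using row_dominated_valid_set[OF fL R] sum_fst_hk_diag[of L R] moved_cells_hk_diag[of L R]
      valid_setsD[OF fL R] fL S by auto
  moreover have "moved_cells L S \<in> valid_sets L k"
    if dom: "row_dominated L S" and deg: "sum fst L = sum fst S + k"
  proof -
    note hk = hk_diag_moved_cells[OF fL fS cS dom]
    have disj: "moved_cells L S \<subseteq> - L" and fin: "finite (moved_cells L S)"
      using moved_cells_disjoint[OF fL fS cS dom] moved_cells_subset_left_of_cells[OF fL fS cS dom]
        finite_left_of_cells[OF fL] by (auto intro: finite_subset)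
    then have "step_right ` moved_cells L S \<subseteq> L \<union> moved_cells L S"
      using step_right_image_subset[OF fL] hk cS by simp
    then have "card (moved_cells L S) = k"
      using sum_fst_hk_diag[OF fL disj fin] hk deg by simp
    then show ?thesis using hk disj fin fS cS by (simp add: valid_sets_def)
  qed
  moreover have "hk_diag L (moved_cells L S) = S" if "row_dominated L S"
    using hk_diag_moved_cells[OF fL fS cS that] .
  ultimately show ?thesis by auto
qed

lemma row_dominated_fact_prod:
  assumes "finite L" "finite S" "card S = card L" "row_dominated L S"
  shows "(\<Prod>x\<in>S. fact (snd x) :: nat) = (\<Prod>x\<in>L. fact (snd x))"
    and "(\<Prod>x\<in>S. fact (fst x) * fact (snd x) :: nat) dvd (\<Prod>x\<in>L. fact (fst x) * fact (snd x))"
  using row_dominated_cells[OF assms]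
  unfolding prod_cells[OF assms(1)] prod_cells[OF assms(2)] assms(3)
  by (auto intro!: prod.cong prod_dvd_prod simp: fact_dvd)

lemma epsilon_row_dominated:
  assumes "finite L" "finite S" "card S = card L" "row_dominated L S"
  shows "epsilon L S = of_nat (\<Prod>x\<in>L. fact (fst x)) / of_nat (\<Prod>x\<in>S. fact (fst x))"
    and "epsilon L S \<in> \<nat>" "epsilon L S > 0"
proof -
  let ?P = "\<lambda>A. \<Prod>x\<in>A. fact (fst x) * fact (snd x) :: nat"
  have prod_split: "(\<Prod>(p, q)\<in>A. fact p * fact q) = ?P A" for A :: "(nat \<times> nat) set"
    by (simp add: case_prod_beta)
  have "(0::nat) < (\<Prod>x\<in>L. fact (snd x))" by (simp add: prod_pos)
  then show "epsilon L S = of_nat (\<Prod>x\<in>L. fact (fst x)) / of_nat (\<Prod>x\<in>S. fact (fst x))"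
    unfolding epsilon_def prod_split prod.distrib row_dominated_fact_prod(1)[OF assms]
    by (simp del: of_nat_prod)
  obtain m where m: "?P L = ?P S * m"
    using row_dominated_fact_prod(2)[OF assms] by (auto simp: dvd_def)
  have "?P S > 0" "?P L > 0" by (simp_all add: prod_pos)
  then have "(of_nat (?P S) :: rat) \<noteq> 0" "m > 0" using m by (simp only: of_nat_eq_0_iff neq0_conv, simp)
  then have "epsilon L S = of_nat m" "m > 0"
    unfolding epsilon_def prod_split m of_nat_mult by simp_all
  then show "epsilon L S \<in> \<nat>" "epsilon L S > 0" by simp_all
qed

definition placement_mat :: "(nat \<times> nat) set \<Rightarrow> (nat \<Rightarrow> nat) \<Rightarrow> (nat \<Rightarrow> nat) \<Rightarrow> rat mat" where
  "placement_mat S a b = mat (card S) (card S) (\<lambda>(i, s). if cells S ! s = (a i, b i) then 1 else 0)"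

lemma placement_mat_carrier: "placement_mat S a b \<in> carrier_mat (card S) (card S)"
  by (simp add: placement_mat_def)

lemma lookup_Delta_xy_exponent:
  "Poly_Mapping.lookup (Delta S) (xy_exponent (card S) a b) = det (placement_mat S a b)"
proof -
  have "Poly_Mapping.lookup (Delta S) (xy_exponent (card S) a b) = (\<Sum>\<sigma>\<in>perms (card S).
     if \<forall>i<card S. cells S ! \<sigma> i = (a i, b i) then of_int (sign \<sigma>) else 0)"
    unfolding Delta_eq_sum_perms lookup_sum lookup_single when_def xy_exponent_eq_iff
    by (simp add: prod_eq_iff)
  also have "\<dots> = det (placement_mat S a b)"
    unfolding det_perms[of "placement_mat S a b" "card S", OF placement_mat_carrier]
  proof (intro sum.cong refl)
    fix \<sigma> assume \<sigma>: "\<sigma> \<in> perms (card S)"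
    then have entry: "placement_mat S a b $$ (i, \<sigma> i) = (if cells S ! \<sigma> i = (a i, b i) then 1 else 0)"
      if "i < card S" for i
      using that perms_less[OF \<sigma> that] by (simp add: placement_mat_def)
    show "(if \<forall>i<card S. cells S ! \<sigma> i = (a i, b i) then of_int (sign \<sigma>) else 0) =
        of_int (sign \<sigma>) * (\<Prod>i<card S. placement_mat S a b $$ (i, \<sigma> i))"
    proof (cases "\<forall>i<card S. cells S ! \<sigma> i = (a i, b i)")
      case True
      then have "(\<Prod>i<card S. placement_mat S a b $$ (i, \<sigma> i)) = 1"
        by (intro prod.neutral) (simp add: entry)
      with True show ?thesis by simp
    next
      case False
      then obtain i where "i < card S" "cells S ! \<sigma> i \<noteq> (a i, b i)" by blast
      then have zero: "(\<Prod>i<card S. placement_mat S a b $$ (i, \<sigma> i)) = 0"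
        by (intro prod_zero) (auto simp: entry)
      show ?thesis unfolding zero using False by simp
    qed
  qed
  finally show ?thesis .
qed

lemma lookup_Delta_eq_0:
  assumes "e \<noteq> xy_exponent (card S) (\<lambda>i. Poly_Mapping.lookup e (Inl i)) (\<lambda>i. Poly_Mapping.lookup e (Inr i))"
  shows "Poly_Mapping.lookup (Delta S) e = 0"
proof -
  have "xy_exponent (card S) \<alpha> \<beta> \<noteq> e" for \<alpha> \<beta> using assms xy_exponent_eqD by blast
  then show ?thesis unfolding Delta_eq_sum_perms lookup_sum lookup_single when_def by simp
qed

lemma lookup_hk_diff_Delta_eq_0:
  assumes "e \<noteq> xy_exponent (card L) (\<lambda>i. Poly_Mapping.lookup e (Inl i)) (\<lambda>i. Poly_Mapping.lookup e (Inr i))"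
  shows "Poly_Mapping.lookup (hk_diff (card L) k (Delta L)) e = 0"
proof -
  have "xy_exponent (card L) \<alpha> \<beta> \<noteq> e" for \<alpha> \<beta> using assms xy_exponent_eqD by blast
  then show ?thesis unfolding hk_diff_Delta_eq lookup_sum lookup_single when_def by simp
qed

lemma reach_mat_factor:
  assumes fL: "finite L" and inj: "inj_on (\<lambda>i. (a i, b i)) {..<card L}"
  defines "S \<equiv> (\<lambda>i. (a i, b i)) ` {..<card L}"
  shows "reach_mat L a b = placement_mat S a b * dominance_mat L S"
proof -
  let ?n = "card L"
  have fS: "finite S" and cS: "card S = ?n" unfolding S_def using inj by (simp_all add: card_image)
  show ?thesis
  proof (rule eq_matI)
    fix i t assume "i < dim_row (placement_mat S a b * dominance_mat L S)"
      "t < dim_col (placement_mat S a b * dominance_mat L S)"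
    then have i: "i < ?n" and t: "t < ?n" by (simp_all add: placement_mat_def dominance_mat_def cS)
    then obtain si where si: "si < ?n" "cells S ! si = (a i, b i)"
      using cells_surj[OF fS, of "(a i, b i)"] cS by (auto simp: S_def)
    have "(placement_mat S a b * dominance_mat L S) $$ (i, t)
        = (\<Sum>s = 0..<?n. placement_mat S a b $$ (i, s) * dominance_mat L S $$ (s, t))"
      using i t by (simp add: placement_mat_def dominance_mat_def cS scalar_prod_def)
    also have "\<dots> = (\<Sum>s = 0..<?n. if s = si then dominance_mat L S $$ (si, t) else 0)"
      using cells_eq_iff[of _ S si] si i cS by (intro sum.cong refl) (auto simp: placement_mat_def)
    also have "\<dots> = reach_mat L a b $$ (i, t)"
      using si i t by (simp add: dominance_mat_def reach_mat_def)
    finally show "reach_mat L a b $$ (i, t) = (placement_mat S a b * dominance_mat L S) $$ (i, t)" ..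
  qed (simp_all add: reach_mat_def placement_mat_def dominance_mat_def cS)
qed

lemma det_mat_identical_rows:
  assumes "i < n" "j < n" "i \<noteq> j" "\<And>t. t < n \<Longrightarrow> f (i, t) = (f (j, t) :: 'a :: comm_ring_1)"
  shows "det (mat n n f) = 0"
  using assms by (intro det_identical_rows[of _ n i j]) auto

lemma det_mat_zero_row:
  assumes "i < n" "\<And>t. t < n \<Longrightarrow> f (i, t) = (0 :: 'a :: comm_ring_1)"
  shows "det (mat n n f) = 0"
proof -
  have "\<sigma> \<in> perms n \<Longrightarrow> (\<Prod>j<n. mat n n f $$ (j, \<sigma> j)) = 0" for \<sigma>
    using assms perms_less[of \<sigma> n i] by (intro prod_zero bexI[of _ i]) auto
  then show ?thesis by (simp add: det_perms[of _ n])
qed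

lemma det_placement_mat_eq_0:
  assumes "finite S" "card S = card L"
    and "(\<lambda>i. (a i, b i)) ` {..<card L} \<noteq> S \<or> \<not> inj_on (\<lambda>i. (a i, b i)) {..<card L}"
  shows "det (placement_mat S a b) = 0"
  using assms(3)
proof
  assume "\<not> inj_on (\<lambda>i. (a i, b i)) {..<card L}"
  then obtain i j where "i < card L" "j < card L" "i \<noteq> j" "a i = a j" "b i = b j"
    unfolding inj_on_def by auto
  then show ?thesis
    unfolding placement_mat_def using assms(2) by (intro det_mat_identical_rows[of i _ j]) simp_all
next
  assume ne: "(\<lambda>i. (a i, b i)) ` {..<card L} \<noteq> S"
  show ?thesis
  proof (cases "inj_on (\<lambda>i. (a i, b i)) {..<card L}")
    case True
    \<comment> \<open>both sets have \<open>card L\<close> elements, so some \<open>(a\<^sub>i, b\<^sub>i)\<close> is not a cell of \<open>S\<close>\<close>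
    then have "card ((\<lambda>i. (a i, b i)) ` {..<card L}) = card S"
      using assms(2) by (simp add: card_image)
    then have "\<not> (\<lambda>i. (a i, b i)) ` {..<card L} \<subseteq> S"
      using ne card_subset_eq[OF assms(1)] by blast
    then obtain i where i: "i < card L" "(a i, b i) \<notin> S" by auto
    have "cells S ! t \<noteq> (a i, b i)" if "t < card S" for t
      using cells_in[OF assms(1) that] i(2) by auto
    then show ?thesis
      unfolding placement_mat_def using i(1) assms(2) by (intro det_mat_zero_row[of i]) auto
  next
    case False
    then obtain i j where "i < card L" "j < card L" "i \<noteq> j" "a i = a j" "b i = b j"
      unfolding inj_on_def by auto
    then show ?thesis
      unfolding placement_mat_def using assms(2) by (intro det_mat_identical_rows[of i _ j]) simp_all
  qed
qed

lemma det_reach_mat_eq_0: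
  "\<not> inj_on (\<lambda>i. (a i, b i)) {..<card L} \<Longrightarrow> det (reach_mat L a b) = 0"
  unfolding reach_mat_def inj_on_def by (auto intro: det_mat_identical_rows)

lemma det_reach_mat_eq:
  assumes fL: "finite L" and inj: "inj_on (\<lambda>i. (a i, b i)) {..<card L}"
  defines "S \<equiv> (\<lambda>i. (a i, b i)) ` {..<card L}"
  shows "det (reach_mat L a b) = det (placement_mat S a b) * (if row_dominated L S then 1 else 0)"
proof -
  have fS: "finite S" and cS: "card S = card L" unfolding S_def using inj by (simp_all add: card_image)
  have "det (reach_mat L a b) = det (placement_mat S a b) * det (dominance_mat L S)"
    unfolding reach_mat_factor[OF fL inj, folded S_def]
    by (rule det_mult[of _ "card L"]) (simp_all add: placement_mat_def dominance_mat_def cS)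
  then show ?thesis using det_dominance_mat[OF fL fS cS] by simp
qed

lemma epsilon_eq_fact_quotient:
  assumes fL: "finite L" and inj: "inj_on (\<lambda>i. (a i, b i)) {..<card L}"
  defines "S \<equiv> (\<lambda>i. (a i, b i)) ` {..<card L}"
  assumes dom: "row_dominated L S"
  shows "epsilon L S = (\<Prod>t<card L. fact (fst (cells L ! t))) / (\<Prod>i<card L. fact (a i))"
proof -
  have fS: "finite S" and cS: "card S = card L" unfolding S_def using inj by (simp_all add: card_image)
  have "(\<Prod>x\<in>S. fact (fst x) :: rat) = (\<Prod>i<card L. fact (a i))"
    unfolding S_def using inj by (simp add: prod.reindex)
  moreover have "(\<Prod>x\<in>L. fact (fst x) :: rat) = (\<Prod>t<card L. fact (fst (cells L ! t)))"
    by (rule prod_cells[OF fL])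
  ultimately show ?thesis using epsilon_row_dominated(1)[OF fL fS cS dom] by simp
qed

lemma coefficient_identity:
  assumes fL: "finite L"
  shows "(if (\<Sum>t<card L. fst (cells L ! t)) = (\<Sum>i<card L. a i) + k
     then (\<Prod>t<card L. fact (fst (cells L ! t))) / (\<Prod>i<card L. fact (a i)) * det (reach_mat L a b) else 0)
   = (\<Sum>R\<in>valid_sets L k. epsilon L (hk_diag L R) * det (placement_mat (hk_diag L R) a b))"
proof (cases "inj_on (\<lambda>i. (a i, b i)) {..<card L}")
  case False
  have "det (placement_mat (hk_diag L R) a b) = 0" if "R \<in> valid_sets L k" for R
    using det_placement_mat_eq_0[of "hk_diag L R" L a b] valid_setsD[OF fL that] False by blast
  then show ?thesis using det_reach_mat_eq_0[OF False] by simp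
next
  case inj: True
  define S where "S = (\<lambda>i. (a i, b i)) ` {..<card L}"
  have fS: "finite S" and cS: "card S = card L" unfolding S_def using inj by (simp_all add: card_image)
  have "det (placement_mat (hk_diag L R) a b) = 0" if "R \<in> valid_sets L k" "hk_diag L R \<noteq> S" for R
    using det_placement_mat_eq_0[of "hk_diag L R" L a b] valid_setsD(5,6)[OF fL that(1)] that(2)
    unfolding S_def by blast
  then have "(\<Sum>R\<in>valid_sets L k. epsilon L (hk_diag L R) * det (placement_mat (hk_diag L R) a b))
      = (\<Sum>R\<in>valid_sets L k. if hk_diag L R = S then epsilon L S * det (placement_mat S a b) else 0)"
    by (intro sum.cong) auto
  also have "\<dots> = (\<Sum>R\<in>{R \<in> valid_sets L k. hk_diag L R = S}. epsilon L S * det (placement_mat S a b))"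
    by (rule sum.inter_filter[OF finite_valid_sets[OF fL], symmetric])
  also have "\<dots> = (if row_dominated L S \<and> sum fst L = sum fst S + k
                   then epsilon L S * det (placement_mat S a b) else 0)"
    by (simp add: valid_sets_fibre[OF fL fS cS])
  also have "\<dots> = (if (\<Sum>t<card L. fst (cells L ! t)) = (\<Sum>i<card L. a i) + k
     then (\<Prod>t<card L. fact (fst (cells L ! t))) / (\<Prod>i<card L. fact (a i)) * det (reach_mat L a b) else 0)"
  proof -
    have "det (reach_mat L a b) = det (placement_mat S a b) * (if row_dominated L S then 1 else 0)"
      using det_reach_mat_eq[OF fL inj] unfolding S_def .
    moreover have "sum fst L = sum fst S + k \<longleftrightarrow>
        (\<Sum>t<card L. fst (cells L ! t)) = (\<Sum>i<card L. a i) + k"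
      unfolding sum_cells[OF fL] S_def using inj by (simp add: sum.reindex)
    ultimately show ?thesis using epsilon_eq_fact_quotient[OF fL inj] unfolding S_def by auto
  qed
  finally show ?thesis ..
qed

lemma lookup_hk_diff_Delta_eq_sum:
  assumes "finite L"
  shows "Poly_Mapping.lookup (hk_diff (card L) k (Delta L)) e =
    (\<Sum>R\<in>valid_sets L k. epsilon L (hk_diag L R) * Poly_Mapping.lookup (Delta (hk_diag L R)) e)"
proof -
  define a where "a = (\<lambda>i. Poly_Mapping.lookup e (Inl i))"
  define b where "b = (\<lambda>i. Poly_Mapping.lookup e (Inr i))"
  show ?thesis
  proof (cases "e = xy_exponent (card L) a b")
    case True
    have "Poly_Mapping.lookup (Delta (hk_diag L R)) e = det (placement_mat (hk_diag L R) a b)"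
      if "R \<in> valid_sets L k" for R
      using lookup_Delta_xy_exponent[of "hk_diag L R" a b] valid_setsD(6)[OF assms that] True
      by simp
    then have "(\<Sum>R\<in>valid_sets L k. epsilon L (hk_diag L R) * Poly_Mapping.lookup (Delta (hk_diag L R)) e)
        = (\<Sum>R\<in>valid_sets L k. epsilon L (hk_diag L R) * det (placement_mat (hk_diag L R) a b))"
      by (intro sum.cong) simp_all
    then show ?thesis
      using True lookup_hk_diff_Delta[of L k a b] coefficient_identity[OF assms, of a k b] by simp
  next
    case False
    have "Poly_Mapping.lookup (Delta (hk_diag L R)) e = 0" if "R \<in> valid_sets L k" for R
      by (rule lookup_Delta_eq_0) (use False valid_setsD(6)[OF assms that] in \<open>simp add: a_def b_def\<close>)
    then have "(\<Sum>R\<in>valid_sets L k. epsilon L (hk_diag L R) * Poly_Mapping.lookup (Delta (hk_diag L R)) e) = 0"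
      by (intro sum.neutral) simp
    with False show ?thesis using lookup_hk_diff_Delta_eq_0[of e L k] by (simp add: a_def b_def)
  qed
qed

lemma lookup_const_poly_mult: "Poly_Mapping.lookup (const_poly c * P) e = c * Poly_Mapping.lookup P e"
  unfolding const_poly_def mult_map_scale_conv_mult[symmetric] by (simp add: map.rep_eq when_def)

theorem mainTheorem3:
  fixes L :: "(nat \<times> nat) set" and k :: nat
  assumes "finite L" and "k \<ge> 1"
  shows "hk_diff (card L) k (Delta L) =
           (\<Sum>R\<in>valid_sets L k. const_poly (epsilon L (hk_diag L R)) * Delta (hk_diag L R))
       \<and> (\<forall>R\<in>valid_sets L k. epsilon L (hk_diag L R) \<in> \<nat> \<and> epsilon L (hk_diag L R) > 0)"
proof
  show "hk_diff (card L) k (Delta L) =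
      (\<Sum>R\<in>valid_sets L k. const_poly (epsilon L (hk_diag L R)) * Delta (hk_diag L R))"
    by (rule poly_mapping_eqI)
       (simp add: lookup_sum lookup_const_poly_mult lookup_hk_diff_Delta_eq_sum[OF assms(1)])
  show "\<forall>R\<in>valid_sets L k. epsilon L (hk_diag L R) \<in> \<nat> \<and> epsilon L (hk_diag L R) > 0"
  proof
    fix R assume R: "R \<in> valid_sets L k"
    show "epsilon L (hk_diag L R) \<in> \<nat> \<and> epsilon L (hk_diag L R) > 0"
      using epsilon_row_dominated(2,3)[OF assms(1) valid_setsD(5,6)[OF assms(1) R]
          row_dominated_valid_set[OF assms(1) R]]
      by simp
  qed
qed

end
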